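(* Let $\mathcal{X}\subseteq\mathbb{R}^d$ and let $\mathcal{M}$ be a mechanism on weighted data sets admitting a weighted distinguishability profile $\epsilon\colon[1,\infty)\times\mathcal{X}\to\mathbb{R}_{\ge0}$ that is differentiable in $w$, with $\epsilon'(w,\mathbf{x})=\partial\epsilon(w,\mathbf{x})/\partial w$, and let $\tilde\epsilon(\mathbf{x})=\epsilon(1,\mathbf{x})$ (the distinguishability profile of the unweighted counterpart $\widetilde{\mathcal{M}}(\{\mathbf{x}_i\})=\mathcal{M}(\{(1,\mathbf{x}_i)\})$). Let $S$ be any Poisson importance sampler, with selection-probability function $q$, and let $\psi(\mathbf{x})=\log\big(1+q(\mathbf{x})(e^{\epsilon(1/q(\mathbf{x}),\mathbf{x})}-1)\big)$ be the distinguishability profile of $\mathcal{M}\circ S$. Let $\mathbf{x}\in\mathcal{X}$. If $\epsilon(w,\mathbf{x})\le w\,\epsilon'(w,\mathbf{x})$ for all $w\ge1$, then $\psi(\mathbf{x})\ge\tilde\epsilon(\mathbf{x})$.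
   Context: A weighted data set is a finite set $\{(w_i,\mathbf{x}_i)\}$ with $w_i\ge1$, $\mathbf{x}_i\in\mathcal{X}$. Distributions $P,Q$ are $\epsilon$-indistinguishable if $P(Y)\le e^\epsilon Q(Y)$ and $Q(Y)\le e^\epsilon P(Y)$ for all measurable $Y$. A weighted distinguishability profile of $\mathcal{M}$ is a function $\epsilon\colon[1,\infty)\times\mathcal{X}\to\mathbb{R}_{\ge0}$ such that for every weighted data set $\mathcal{S}$ and every $(w',\mathbf{x}')$, $\mathcal{M}(\mathcal{S})$ and $\mathcal{M}(\mathcal{S}\cup\{(w',\mathbf{x}')\})$ are $\epsilon(w',\mathbf{x}')$-indistinguishable. A Poisson importance sampler for a function $q\colon\mathcal{X}\to(0,1]$ maps $\mathcal{D}=\{\mathbf{x}_1,\dots,\mathbf{x}_n\}$ to $\{(1/q(\mathbf{x}_i),\mathbf{x}_i)\mid\gamma_i=1\}$ with $\gamma_i$ independent Bernoulli$(q(\mathbf{x}_i))$. *)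

theory Defs
  imports "HOL-Analysis.Analysis" "HOL-Probability.Probability"
begin

definition weighted_dataset :: "'a set \<Rightarrow> (real \<times> 'a) set \<Rightarrow> bool" where
  "weighted_dataset X S \<longleftrightarrow> finite S \<and> (\<forall>(w, x) \<in> S. w \<ge> 1 \<and> x \<in> X)"

definition indist :: "'b measure \<Rightarrow> 'b measure \<Rightarrow> real \<Rightarrow> bool" where
  "indist P Q eps \<longleftrightarrow> sets P = sets Q \<and>
     (\<forall>Y \<in> sets P. emeasure P Y \<le> ennreal (exp eps) * emeasure Q Y
                  \<and> emeasure Q Y \<le> ennreal (exp eps) * emeasure P Y)"

definition weighted_dist_profile ::
    "'a set \<Rightarrow> ((real \<times> 'a) set \<Rightarrow> 'b measure) \<Rightarrow> (real \<Rightarrow> 'a \<Rightarrow> real) \<Rightarrow> bool" where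
  "weighted_dist_profile X M eps \<longleftrightarrow>
     (\<forall>w x. w \<ge> 1 \<longrightarrow> x \<in> X \<longrightarrow> eps w x \<ge> 0) \<and>
     (\<forall>S w' x'. weighted_dataset X S \<longrightarrow> w' \<ge> 1 \<longrightarrow> x' \<in> X \<longrightarrow>
        indist (M S) (M (S \<union> {(w', x')})) (eps w' x'))"

definition psi :: "(real \<Rightarrow> 'a \<Rightarrow> real) \<Rightarrow> ('a \<Rightarrow> real) \<Rightarrow> 'a \<Rightarrow> real" where
  "psi eps q x = ln (1 + q x * (exp (eps (1 / q x) x) - 1))"

end

theory Submission
  imports Defs
begin

text \<open>The hypothesis \<open>\<epsilon> \<le> w \<epsilon>'\<close> says that \<open>\<epsilon>(w, x) / w\<close> is nondecreasing in \<open>w\<close>, so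
  \<open>\<epsilon>(1/q, x) \<ge> \<epsilon>(1, x) / q\<close>. Convexity of \<open>exp\<close> on the segment from \<open>0\<close> to \<open>a / q\<close> gives
  \<open>exp a \<le> 1 + q (exp (a / q) - 1)\<close>; with \<open>a = \<epsilon>(1, x)\<close> and after taking logarithms this is the
  claim. The mechanism enters only through the formula for \<open>\<psi>\<close>.\<close>

lemma exp_le_one_plus_mult_exp_divide:
  fixes a q :: real
  assumes "0 < q" "q \<le> 1"
  shows "exp a \<le> 1 + q * (exp (a / q) - 1)"
proof -
  have "exp ((1 - q) *\<^sub>R 0 + q *\<^sub>R (a / q)) \<le> (1 - q) * exp 0 + q * exp (a / q)"
    using assms by (intro convex_onD[OF exp_convex]) auto
  then show ?thesis
    using assms by (simp add: algebra_simps)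
qed

lemma divide_self_mono_if_le_mult_deriv:
  fixes f f' :: "real \<Rightarrow> real"
  assumes "0 < a" "a \<le> u" "u \<le> w"
    and deriv: "\<And>v. a \<le> v \<Longrightarrow> (f has_real_derivative f' v) (at v within {a..})"
    and le_deriv: "\<And>v. a \<le> v \<Longrightarrow> f v \<le> v * f' v"
  shows "f u / u \<le> f w / w"
proof (rule DERIV_nonneg_imp_increasing_open[OF \<open>u \<le> w\<close>])
  fix v assume v: "u < v" "v < w"
  have "at v within {a..} = at v"
    using v \<open>a \<le> u\<close> by (intro at_within_interior) auto
  then have "(f has_real_derivative f' v) (at v)"
    using deriv[of v] v \<open>a \<le> u\<close> by simp
  then have "((\<lambda>v. f v / v) has_real_derivative (f' v * v - f v) / (v * v)) (at v)"
    using v \<open>0 < a\<close> \<open>a \<le> u\<close> by (auto intro!: derivative_eq_intros)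
  moreover have "(f' v * v - f v) / (v * v) \<ge> 0"
    using le_deriv[of v] v \<open>a \<le> u\<close> by (simp add: algebra_simps)
  ultimately show "\<exists>y. ((\<lambda>v. f v / v) has_real_derivative y) (at v) \<and> 0 \<le> y"
    by blast
next
  have "continuous_on {a..} f"
    using deriv by (auto simp: continuous_on_eq_continuous_within intro: DERIV_continuous)
  then have "continuous_on {u..w} f"
    by (rule continuous_on_subset) (use \<open>a \<le> u\<close> in auto)
  then show "continuous_on {u..w} (\<lambda>v. f v / v)"
    using \<open>0 < a\<close> \<open>a \<le> u\<close> by (intro continuous_intros) auto
qed

theorem proposition3:
  fixes X :: "(real ^ 'd) set"
    and M :: "(real \<times> (real ^ 'd)) set \<Rightarrow> 'b measure"
    and eps eps' :: "real \<Rightarrow> real ^ 'd \<Rightarrow> real"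
    and q :: "real ^ 'd \<Rightarrow> real"
    and x :: "real ^ 'd"
  assumes prob: "\<And>S. weighted_dataset X S \<Longrightarrow> prob_space (M S)"
    and profile: "weighted_dist_profile X M eps"
    and deriv: "\<And>w y. w \<ge> 1 \<Longrightarrow> y \<in> X \<Longrightarrow>
                  ((\<lambda>v. eps v y) has_real_derivative eps' w y) (at w within {1..})"
    and q_range: "\<And>y. y \<in> X \<Longrightarrow> 0 < q y \<and> q y \<le> 1"
    and x_in: "x \<in> X"
    and cond: "\<And>w. w \<ge> 1 \<Longrightarrow> eps w x \<le> w * eps' w x"
  shows "psi eps q x \<ge> eps 1 x"
proof -
  have q: "0 < q x" "q x \<le> 1"
    using q_range x_in by auto
  have "eps 1 x / 1 \<le> eps (1 / q x) x / (1 / q x)"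
    using q deriv x_in cond
    by (intro divide_self_mono_if_le_mult_deriv[where a = 1 and f' = "\<lambda>v. eps' v x"]) auto
  then have ratio: "eps 1 x / q x \<le> eps (1 / q x) x"
    using q by (simp add: field_simps)
  have "exp (eps 1 x) \<le> 1 + q x * (exp (eps 1 x / q x) - 1)"
    using exp_le_one_plus_mult_exp_divide[OF q] by simp
  also have "\<dots> \<le> 1 + q x * (exp (eps (1 / q x) x) - 1)"
    using ratio q by (simp add: mult_left_mono)
  finally have "exp (eps 1 x) \<le> 1 + q x * (exp (eps (1 / q x) x) - 1)" .
  then show ?thesis
    unfolding psi_def by (subst ln_ge_iff) (auto intro: less_le_trans[OF exp_gt_zero])
qed

end
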